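(* Let $G$ be a finite directed multigraph with vertex set $V$. The map $$H\mapsto P(G)_H:=\{\vec x\in P(G)\mid x_e=0 \text{ for all } e\notin E(H)\}$$ is an isomorphism of posets from the set of full subgraphs $H$ of $G$ with non-empty edge set (ordered by inclusion of edge sets) onto the face poset of $P(G)$ (faces ordered by inclusion). Moreover, identifying $\mathbb{R}^{E(H)}$ with its image under the coordinate inclusion $\mathbb{R}^{E(H)}\hookrightarrow\mathbb{R}^{E(G)}$, one has $P(H)=P(G)_H$, and $$\dim P(G)_H=|E(H)|-|V|+c(H)-1,$$ where $c(H)$ is the number of connected components of $H$ (isolated vertices counted as components).
   Context: For a directed multigraph $G$: a walk is a sequence of edges $(e_1,\dots,e_k)$ with $\mathrm{ar}(e_i)=\mathrm{st}(e_{i+1})$; a cycle is a walk with $\mathrm{st}(e_1)=\mathrm{ar}(e_k)$; a path is a walk with distinct edges and distinct vertices except possibly $\mathrm{st}(e_1)=\mathrm{ar}(e_k)$; a simple cycle is a non-empty cycle that is a path. For a non-empty cycle $\mathcal{C}$, $(\vec{e}_{\mathcal{C}})_e=n_e(\mathcal{C})/|\mathcal{C}|$. $P(G)=\mathrm{conv}\{\vec{e}_{\mathcal{C}}\mid\mathcal{C}\text{ simple cycle of }G\}\subset\mathbb{R}^{E(G)}$. A subgraph of $G$ here means $H=(V,E(H))$ with the same vertex set and $E(H)\subseteq E(G)$ (as multisets); $H$ is full if every edge of $H$ lies on a cycle of $H$. A face of a polytope $\mathfrak p\subset\mathbb{R}^n$ is a set of the form $\mathfrak p_f=\arg\min_{\mathfrak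 p} f$ for some linear form $f:\mathbb{R}^n\to\mathbb{R}$ (faces are thus non-empty, and $\mathfrak p$ itself is a face). The dimension of a polytope is that of its affine span. *)

theory Defs
  imports "HOL-Analysis.Analysis"
begin

text \<open>Directed multigraph: edges are the elements of a finite type 'e (so parallel
edges are distinct elements), vertices form a finite set V, and
st, ar :: 'e \<Rightarrow> 'v are the start and arrival maps.  A subgraph H with the same
vertex set is given by its edge set F :: 'e set.\<close>

definition is_walk :: "('e \<Rightarrow> 'v) \<Rightarrow> ('e \<Rightarrow> 'v) \<Rightarrow> 'e list \<Rightarrow> bool" where
  "is_walk st ar es \<longleftrightarrow> (\<forall>i. Suc i < length es \<longrightarrow> ar (es ! i) = st (es ! Suc i))"

definition is_cycle :: "('e \<Rightarrow> 'v) \<Rightarrow> ('e \<Rightarrow> 'v) \<Rightarrow> 'e list \<Rightarrow> bool" where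
  "is_cycle st ar es \<longleftrightarrow> is_walk st ar es \<and> (es \<noteq> [] \<longrightarrow> st (hd es) = ar (last es))"

definition walk_verts :: "('e \<Rightarrow> 'v) \<Rightarrow> ('e \<Rightarrow> 'v) \<Rightarrow> 'e list \<Rightarrow> 'v list" where
  "walk_verts st ar es = st (hd es) # map ar es"

definition is_path :: "('e \<Rightarrow> 'v) \<Rightarrow> ('e \<Rightarrow> 'v) \<Rightarrow> 'e list \<Rightarrow> bool" where
  "is_path st ar es \<longleftrightarrow> is_walk st ar es \<and> distinct es \<and>
     (es = [] \<or> distinct (walk_verts st ar es) \<or>
       (st (hd es) = ar (last es) \<and> distinct (map ar es)))"

definition is_simple_cycle :: "('e \<Rightarrow> 'v) \<Rightarrow> ('e \<Rightarrow> 'v) \<Rightarrow> 'e list \<Rightarrow> bool" where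
  "is_simple_cycle st ar es \<longleftrightarrow> es \<noteq> [] \<and> is_cycle st ar es \<and> is_path st ar es"

definition cycle_vec :: "'e list \<Rightarrow> real ^ ('e::finite)" where
  "cycle_vec C = (\<chi> e. real (count_list C e) / real (length C))"

text \<open>P(H) for the subgraph with edge set F, viewed inside R^{E(G)} via the
coordinate inclusion R^{E(H)} \<hookrightarrow> R^{E(G)}.  P(G) = cycle_polytope st ar UNIV.\<close>
definition cycle_polytope :: "('e \<Rightarrow> 'v) \<Rightarrow> ('e \<Rightarrow> 'v) \<Rightarrow> 'e set \<Rightarrow> (real ^ ('e::finite)) set" where
  "cycle_polytope st ar F =
     convex hull {cycle_vec C | C. is_simple_cycle st ar C \<and> set C \<subseteq> F}"

definition is_full :: "('e \<Rightarrow> 'v) \<Rightarrow> ('e \<Rightarrow> 'v) \<Rightarrow> 'e set \<Rightarrow> bool" where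
  "is_full st ar F \<longleftrightarrow> (\<forall>e\<in>F. \<exists>C. is_cycle st ar C \<and> set C \<subseteq> F \<and> e \<in> set C)"

definition is_face :: "(real ^ ('e::finite)) set \<Rightarrow> (real ^ 'e) set \<Rightarrow> bool" where
  "is_face p S \<longleftrightarrow> S \<noteq> {} \<and>
     (\<exists>f :: real ^ 'e \<Rightarrow> real. linear f \<and> S = {x \<in> p. \<forall>y\<in>p. f x \<le> f y})"

definition restr_face :: "(real ^ ('e::finite)) set \<Rightarrow> 'e set \<Rightarrow> (real ^ 'e) set" where
  "restr_face p F = {x \<in> p. \<forall>e. e \<notin> F \<longrightarrow> x $ e = 0}"

definition conn_rel :: "'v set \<Rightarrow> ('e \<Rightarrow> 'v) \<Rightarrow> ('e \<Rightarrow> 'v) \<Rightarrow> 'e set \<Rightarrow> ('v \<times> 'v) set" where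
  "conn_rel V st ar F =
     {(u, v). u \<in> V \<and> v \<in> V \<and>
        (u, v) \<in> ({(st e, ar e) | e. e \<in> F} \<union> {(ar e, st e) | e. e \<in> F})\<^sup>*}"

definition num_components :: "'v set \<Rightarrow> ('e \<Rightarrow> 'v) \<Rightarrow> ('e \<Rightarrow> 'v) \<Rightarrow> 'e set \<Rightarrow> nat" where
  "num_components V st ar F = card (V // conn_rel V st ar F)"

end

theory Submission
  imports Defs
begin

text \<open>
  Both \<open>P(H)\<close> and \<open>P(G)\<^sub>H\<close> are the polytope of nonnegative circulations supported on \<open>E(H)\<close>
  with total weight 1: cycle vectors are such circulations, and conversely the cycle vector of a
  simple cycle inside the support of a circulation can be peeled off, shrinking the support.
  For full \<open>H\<close> this polytope is the face of \<open>P(G)\<close> minimising the weight outside \<open>E(H)\<close>.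
  Conversely, a face is convex, so it contains a point positive on the union \<open>F\<close> of the supports
  of its points; from that point one can move a little in the direction of any circulation
  supported on \<open>F\<close>, so a linear form minimised there is constant on the polytope of \<open>F\<close>, which
  is therefore the face; \<open>F\<close> is full because every point decomposes into cycles in its support.
  The same perturbation shows that the affine hull of \<open>P(H)\<close> is the circulation space of \<open>H\<close>
  cut by the hyperplane of total weight 1. Circulations are the orthogonal complement in
  \<open>\<real>\<^bsup>E(H)\<^esup>\<close> of the vertex incidence vectors, which span a space of dimension
  \<open>|V| - c(H)\<close>: dropping one vertex from each component leaves a basis.
\<close>

section \<open>Cycles\<close>

lemma rotate1_map_st_cycle:
  assumes "is_cycle st ar C"
  shows "rotate1 (map st C) = map ar C"
proof (rule nth_equalityI)
  fix i assume i: "i < length (rotate1 (map st C))"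
  show "rotate1 (map st C) ! i = map ar C ! i"
  proof (cases "Suc i < length C")
    case True
    then show ?thesis using assms by (simp add: nth_rotate1 is_cycle_def is_walk_def)
  next
    case False
    then have "i = length C - 1" "C \<noteq> []" using i by auto
    then show ?thesis using assms by (simp add: nth_rotate1 is_cycle_def hd_conv_nth last_conv_nth)
  qed
qed simp

lemma sum_list_rotate1: "sum_list (rotate1 xs) = (sum_list xs :: 'a::comm_monoid_add)"
  by (cases xs) (simp_all add: add.commute)

lemma count_list_distinct: "distinct xs \<Longrightarrow> count_list xs x = (if x \<in> set xs then 1 else 0)"
  by (induction xs) auto

lemma sum_count_list_mult:
  "(\<Sum>e\<in>UNIV. real (count_list C e) * f e) = (\<Sum>e\<leftarrow>C. f e)"
  for C :: "'e::finite list"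
proof (induction C)
  case (Cons a C)
  have "(\<Sum>e\<in>UNIV. real (count_list (a # C) e) * f e)
      = (\<Sum>e\<in>UNIV. (if e = a then f e else 0) + real (count_list C e) * f e)"
    by (rule sum.cong) (auto simp: distrib_right)
  then show ?case by (simp add: sum.distrib Cons)
qed simp

lemma inner_cycle_vec: "cycle_vec C \<bullet> a = (\<Sum>e\<leftarrow>C. a $ e) / real (length C)"
  unfolding cycle_vec_def inner_vec_def
  by (simp add: sum_count_list_mult[symmetric] sum_divide_distrib)

lemma exists_cycle_if_successors:
  fixes st ar :: "'e::finite \<Rightarrow> 'v"
  assumes "S \<noteq> {}" and succ: "\<forall>e\<in>S. \<exists>e'\<in>S. st e' = ar e"
  shows "\<exists>C. C \<noteq> [] \<and> is_cycle st ar C \<and> set C \<subseteq> S"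
proof -
  obtain e0 where e0: "e0 \<in> S" using assms(1) by blast
  define next_edge where "next_edge e = (SOME e'. e' \<in> S \<and> st e' = ar e)" for e
  have next_edge: "next_edge e \<in> S \<and> st (next_edge e) = ar e" if "e \<in> S" for e
    unfolding next_edge_def by (rule someI_ex) (use succ that in blast)
  define s where "s n = (next_edge ^^ n) e0" for n
  have s_in: "s n \<in> S" for n
    by (induction n) (auto simp: s_def e0 next_edge)
  have s_step: "st (s (Suc n)) = ar (s n)" for n
    using next_edge[OF s_in[of n]] by (simp add: s_def)
  have "\<not> inj s"
    using inj_on_finite[of s UNIV "UNIV :: 'e set"] by auto
  then obtain i j where ij: "i < j" "s i = s j"
    unfolding inj_def by (metis linorder_neqE_nat)
  define C where "C = map s [Suc i..<Suc j]"
  have len: "length C = j - i"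
    using ij by (simp add: C_def del: upt_Suc)
  have nth: "C ! k = s (Suc i + k)" if "k < j - i" for k
    using that by (simp add: C_def nth_map_upt del: upt_Suc)
  have "C \<noteq> []" using ij len by auto
  moreover have "is_walk st ar C"
    unfolding is_walk_def len using nth s_step by (metis Suc_lessD add_Suc_right)
  moreover have "st (hd C) = ar (last C)"
    using nth[of 0] nth[of "j - i - 1"] ij len s_step[of i] \<open>C \<noteq> []\<close>
    by (simp add: hd_conv_nth last_conv_nth)
  moreover have "set C \<subseteq> S" unfolding C_def using s_in by auto
  ultimately show ?thesis unfolding is_cycle_def by blast
qed

lemma is_cycle_shortcut:
  assumes C: "is_cycle st ar C" and ij: "i < j" "j < length C" "ar (C!i) = ar (C!j)"
  shows "is_cycle st ar (drop (Suc i) (take (Suc j) C))" (is "is_cycle st ar ?D")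
proof -
  have len: "length ?D = j - i" using ij by simp
  have nth: "?D ! k = C ! (Suc i + k)" if "k < j - i" for k
    using that ij by simp
  have step: "ar (C ! k) = st (C ! Suc k)" if "Suc k < length C" for k
    using C that by (simp add: is_cycle_def is_walk_def)
  have "is_walk st ar ?D"
    unfolding is_walk_def len using nth step ij by auto
  moreover have "st (hd ?D) = ar (last ?D)"
    using nth[of 0] nth[of "j - i - 1"] step[of i] ij len
    by (simp add: hd_conv_nth last_conv_nth)
  ultimately show ?thesis unfolding is_cycle_def by blast
qed

lemma exists_simple_cycle_if_successors:
  fixes st ar :: "'e::finite \<Rightarrow> 'v"
  assumes "S \<noteq> {}" "\<forall>e\<in>S. \<exists>e'\<in>S. st e' = ar e"
  shows "\<exists>C. is_simple_cycle st ar C \<and> set C \<subseteq> S"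
proof -
  define P where "P C \<longleftrightarrow> C \<noteq> [] \<and> is_cycle st ar C \<and> set C \<subseteq> S" for C
  obtain C0 where "P C0"
    using exists_cycle_if_successors[OF assms] unfolding P_def by blast
  then obtain C where C: "P C" and shortest: "\<And>D. P D \<Longrightarrow> length C \<le> length D"
    using ex_has_least_nat[of P C0 length] by blast
  have "distinct (map ar C)"
  proof (rule ccontr)
    assume "\<not> distinct (map ar C)"
    then obtain i j where ij: "i < j" "j < length C" "ar (C!i) = ar (C!j)"
      unfolding distinct_conv_nth by (metis length_map linorder_neqE_nat nth_map)
    let ?D = "drop (Suc i) (take (Suc j) C)"
    have "P ?D"
      using C ij is_cycle_shortcut[of st ar C i j] unfolding P_def
      by (auto dest: in_set_dropD in_set_takeD)
    then show False
      using shortest[of ?D] ij by simp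
  qed
  then have "is_simple_cycle st ar C"
    using C distinct_map[of ar C] by (auto simp: P_def is_simple_cycle_def is_path_def is_cycle_def)
  then show ?thesis using C P_def by blast
qed

section \<open>The polytope of normalised circulations\<close>

definition incidence :: "('e::finite \<Rightarrow> 'v) \<Rightarrow> ('e \<Rightarrow> 'v) \<Rightarrow> 'v \<Rightarrow> real^'e" where
  "incidence st ar v = (\<chi> e. of_bool (ar e = v) - of_bool (st e = v))"

definition coord_subspace :: "'e set \<Rightarrow> (real^'e::finite) set" where
  "coord_subspace F = {x. \<forall>e. e \<notin> F \<longrightarrow> x$e = 0}"

definition circulations :: "('e::finite \<Rightarrow> 'v) \<Rightarrow> ('e \<Rightarrow> 'v) \<Rightarrow> 'e set \<Rightarrow> (real^'e) set" where
  "circulations st ar F = {x \<in> coord_subspace F. \<forall>v. x \<bullet> incidence st ar v = 0}"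

text \<open>Here \<open>1 :: real^'e\<close> is the all-ones vector, so \<open>x \<bullet> 1\<close> is the total weight of \<open>x\<close>.\<close>

definition flow_polytope :: "('e::finite \<Rightarrow> 'v) \<Rightarrow> ('e \<Rightarrow> 'v) \<Rightarrow> 'e set \<Rightarrow> (real^'e) set" where
  "flow_polytope st ar F = {x \<in> circulations st ar F. (\<forall>e. 0 \<le> x$e) \<and> x \<bullet> 1 = 1}"

lemma inner_one_vec: "x \<bullet> (1 :: real^'e::finite) = (\<Sum>e\<in>UNIV. x$e)"
  by (simp add: inner_vec_def)

lemma inner_incidence:
  "x \<bullet> incidence st ar v = (\<Sum>e | ar e = v. x$e) - (\<Sum>e | st e = v. x$e)"
  by (simp add: incidence_def inner_vec_def right_diff_distrib sum_subtractf)

lemma subspace_coord_subspace: "subspace (coord_subspace F)"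
  unfolding subspace_def coord_subspace_def by auto

lemma subspace_circulations: "subspace (circulations st ar F)"
  unfolding subspace_def circulations_def coord_subspace_def
  by (auto simp: inner_add_left)

lemma flow_polytope_mono: "F \<subseteq> G \<Longrightarrow> flow_polytope st ar F \<subseteq> flow_polytope st ar G"
  unfolding flow_polytope_def circulations_def coord_subspace_def by auto

lemma convex_flow_polytope: "convex (flow_polytope st ar F)"
  unfolding convex_def flow_polytope_def
  by (auto simp: inner_add_left subspace_add subspace_scale subspace_circulations)

lemma cycle_vec_in_flow_polytope:
  fixes st ar :: "'e::finite \<Rightarrow> 'v"
  assumes "is_cycle st ar C" "C \<noteq> []"
  shows "cycle_vec C \<in> flow_polytope st ar (set C)"
proof -
  have balanced: "(\<Sum>e\<leftarrow>C. f (ar e)) = (\<Sum>e\<leftarrow>C. f (st e))" for f :: "'v \<Rightarrow> real"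
  proof -
    have "sum_list (map f (map ar C)) = sum_list (map f (rotate1 (map st C)))"
      by (simp only: rotate1_map_st_cycle[OF assms(1)])
    also have "\<dots> = sum_list (map f (map st C))"
      by (simp only: rotate1_map[symmetric] sum_list_rotate1)
    finally show ?thesis by (simp add: comp_def)
  qed
  have "cycle_vec C \<bullet> incidence st ar v = 0" for v
    using balanced[of "\<lambda>u. of_bool (u = v)"]
    by (simp add: inner_cycle_vec incidence_def sum_list_subtractf)
  moreover have "cycle_vec C \<bullet> 1 = 1"
    using assms(2) by (simp add: inner_cycle_vec sum_list_triv)
  ultimately show ?thesis
    by (simp add: flow_polytope_def circulations_def coord_subspace_def cycle_vec_def)
qed

lemma flow_polytope_support: "x \<in> flow_polytope st ar F \<Longrightarrow> x$e \<noteq> 0 \<Longrightarrow> e \<in> F"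
  by (auto simp: flow_polytope_def circulations_def coord_subspace_def)

lemma flow_support_nonempty:
  assumes "x \<in> flow_polytope st ar F"
  shows "\<exists>e. 0 < x$e"
proof (rule ccontr)
  assume "\<not> ?thesis"
  then have "x = 0"
    using assms unfolding flow_polytope_def vec_eq_iff by (simp add: not_less order.antisym)
  then show False
    using assms by (simp add: flow_polytope_def)
qed

lemma flow_positive_successor:
  assumes x: "x \<in> flow_polytope st ar F" and e: "0 < x$e"
  shows "\<exists>e'. 0 < x$e' \<and> st e' = ar e"
proof (rule ccontr)
  assume "\<not> ?thesis"
  then have "(\<Sum>e' | st e' = ar e. x$e') \<le> 0"
    by (intro sum_nonpos) (auto simp: not_less)
  moreover have "x$e \<le> (\<Sum>e' | ar e' = ar e. x$e')"
    using x by (intro member_le_sum) (auto simp: flow_polytope_def)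
  moreover have "x \<bullet> incidence st ar (ar e) = 0"
    using x by (simp add: flow_polytope_def circulations_def)
  ultimately show False
    using e by (simp add: inner_incidence)
qed

lemma flow_split_off_cycle:
  fixes st ar :: "'e::finite \<Rightarrow> 'v"
  assumes x: "x \<in> flow_polytope st ar F"
    and C: "is_simple_cycle st ar C" "set C \<subseteq> {e. 0 < x$e}"
  shows "x = cycle_vec C \<or>
    (\<exists>u y. 0 < u \<and> u < 1 \<and> y \<in> flow_polytope st ar F \<and>
       {e. y$e \<noteq> 0} \<subset> {e. x$e \<noteq> 0} \<and> x = u *\<^sub>R cycle_vec C + (1 - u) *\<^sub>R y)"
proof -
  have C_ne: "C \<noteq> []" and C_cycle: "is_cycle st ar C" and C_dist: "distinct C"
    using C(1) unfolding is_simple_cycle_def is_path_def by auto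
  define m where "m = Min ((\<lambda>e. x$e) ` set C)"
  have m_le: "m \<le> x$e" if "e \<in> set C" for e
    unfolding m_def using that by simp
  have "m \<in> (\<lambda>e. x$e) ` set C"
    unfolding m_def using C_ne by (intro Min_in) auto
  then obtain e0 where e0: "e0 \<in> set C" "x$e0 = m" by blast
  have m_pos: "0 < m" using e0 C(2) by auto
  \<comment> \<open>\<open>u\<close> is the largest multiple of the cycle vector that can be removed from \<open>x\<close>; it kills \<open>e0\<close>.\<close>
  define u where "u = m * real (length C)"
  have u_pos: "0 < u" using m_pos C_ne by (simp add: u_def)
  define r where "r = x - u *\<^sub>R cycle_vec C"
  have r_nth: "r$e = x$e - (if e \<in> set C then m else 0)" for e
    using C_ne by (simp add: r_def u_def cycle_vec_def count_list_distinct[OF C_dist])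
  have x_nonneg: "0 \<le> x$e" for e
    using x by (simp add: flow_polytope_def)
  have r_nonneg: "0 \<le> r$e" for e
    using x_nonneg[of e] m_le[of e] by (simp add: r_nth)
  have "set C \<subseteq> F"
    using C(2) flow_polytope_support[OF x] by force
  then have c_flow: "cycle_vec C \<in> flow_polytope st ar F"
    using cycle_vec_in_flow_polytope[OF C_cycle C_ne] flow_polytope_mono by blast
  then have r_circ: "r \<in> circulations st ar F"
    using x unfolding r_def flow_polytope_def
    by (simp add: subspace_diff subspace_scale subspace_circulations)
  have r_one: "r \<bullet> 1 = 1 - u"
    using x c_flow by (simp add: r_def flow_polytope_def inner_diff_left)
  have supp: "{e. r$e \<noteq> 0} \<subset> {e. x$e \<noteq> 0}"
    using C(2) e0 m_pos by (auto simp: r_nth split: if_splits)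
  have "0 \<le> r \<bullet> 1"
    using r_nonneg by (simp add: inner_one_vec sum_nonneg)
  then consider "u = 1" | "u < 1" using r_one by linarith
  then show ?thesis
  proof cases
    case 1
    then have "r = 0"
      using r_one r_nonneg sum_nonneg_eq_0_iff[of UNIV "\<lambda>e. r$e"]
      by (simp add: inner_one_vec vec_eq_iff)
    then show ?thesis using 1 by (simp add: r_def)
  next
    case 2
    define y where "y = (1 / (1 - u)) *\<^sub>R r"
    have "y \<in> flow_polytope st ar F"
      using 2 r_circ r_nonneg r_one
      by (simp add: y_def flow_polytope_def subspace_scale subspace_circulations)
    moreover have "{e. y$e \<noteq> 0} \<subset> {e. x$e \<noteq> 0}" using 2 supp by (simp add: y_def)
    moreover have "x = u *\<^sub>R cycle_vec C + (1 - u) *\<^sub>R y"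
      using 2 by (simp add: y_def r_def)
    ultimately show ?thesis using u_pos 2 by blast
  qed
qed

lemma flow_polytope_subset_cycle_polytope:
  fixes st ar :: "'e::finite \<Rightarrow> 'v"
  shows "x \<in> flow_polytope st ar F \<Longrightarrow> x \<in> cycle_polytope st ar F"
proof (induction "card {e. x$e \<noteq> 0}" arbitrary: x rule: less_induct)
  case less
  define S where "S = {e. 0 < x$e}"
  have "S \<noteq> {}" "\<forall>e\<in>S. \<exists>e'\<in>S. st e' = ar e"
    using flow_support_nonempty[OF less.prems] flow_positive_successor[OF less.prems]
    unfolding S_def by auto
  then obtain C where C: "is_simple_cycle st ar C" "set C \<subseteq> S"
    using exists_simple_cycle_if_successors by blast
  have "set C \<subseteq> F"
    using C(2) flow_polytope_support[OF less.prems] by (force simp: S_def)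
  then have C_in: "cycle_vec C \<in> cycle_polytope st ar F"
    unfolding cycle_polytope_def using C(1) by (intro hull_inc) blast
  from flow_split_off_cycle[OF less.prems C[unfolded S_def]]
  consider "x = cycle_vec C"
    | u y where "0 < u" "u < 1" "y \<in> flow_polytope st ar F" "{e. y$e \<noteq> 0} \<subset> {e. x$e \<noteq> 0}"
        "x = u *\<^sub>R cycle_vec C + (1 - u) *\<^sub>R y"
    by blast
  then show ?case
  proof cases
    case 1
    then show ?thesis using C_in by simp
  next
    case (2 u y)
    have "y \<in> cycle_polytope st ar F"
      using less.hyps[OF psubset_card_mono[OF _ 2(4)] 2(3)] by simp
    with C_in have "u *\<^sub>R cycle_vec C + (1 - u) *\<^sub>R y \<in> cycle_polytope st ar F"
      unfolding cycle_polytope_def by (rule convexD[OF convex_convex_hull]) (use 2 in auto)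
    then show ?thesis by (simp only: 2(5))
  qed
qed

lemma cycle_polytope_eq_flow_polytope:
  fixes st ar :: "'e::finite \<Rightarrow> 'v"
  shows "cycle_polytope st ar F = flow_polytope st ar F"
proof
  show "cycle_polytope st ar F \<subseteq> flow_polytope st ar F"
    unfolding cycle_polytope_def
  proof (rule hull_minimal)
    show "{cycle_vec C |C. is_simple_cycle st ar C \<and> set C \<subseteq> F} \<subseteq> flow_polytope st ar F"
    proof clarify
      fix C assume "is_simple_cycle st ar C" "set C \<subseteq> F"
      then show "cycle_vec C \<in> flow_polytope st ar F"
        using cycle_vec_in_flow_polytope[of st ar C] flow_polytope_mono[of "set C" F st ar]
        unfolding is_simple_cycle_def by blast
    qed
  qed (rule convex_flow_polytope)
qed (use flow_polytope_subset_cycle_polytope in blast)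

section \<open>Faces\<close>

lemma restr_face_flow_polytope:
  "restr_face (flow_polytope st ar UNIV) F = flow_polytope st ar F"
  by (auto simp: restr_face_def flow_polytope_def circulations_def coord_subspace_def)

lemma full_flow_positive:
  assumes "is_full st ar F" "e \<in> F"
  shows "\<exists>x\<in>flow_polytope st ar F. 0 < x$e"
proof -
  obtain C where C: "is_cycle st ar C" "set C \<subseteq> F" "e \<in> set C"
    using assms unfolding is_full_def by blast
  then have "C \<noteq> []" by auto
  then have "cycle_vec C \<in> flow_polytope st ar F"
    using cycle_vec_in_flow_polytope[OF C(1)] flow_polytope_mono[OF C(2)] by blast
  moreover have "count_list C e \<noteq> 0"
    using C(3) by (simp add: count_list_0_iff)
  then have "0 < cycle_vec C $ e"
    using \<open>C \<noteq> []\<close> by (simp add: cycle_vec_def)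
  ultimately show ?thesis by blast
qed

lemma flow_polytope_subset_iff:
  assumes "is_full st ar F1"
  shows "flow_polytope st ar F1 \<subseteq> flow_polytope st ar F2 \<longleftrightarrow> F1 \<subseteq> F2"
proof
  assume "flow_polytope st ar F1 \<subseteq> flow_polytope st ar F2"
  then show "F1 \<subseteq> F2"
    using full_flow_positive[OF assms] flow_polytope_support by fastforce
qed (rule flow_polytope_mono)

lemma convex_exists_positive_on:
  fixes S :: "(real^'n) set"
  assumes "convex S" "S \<noteq> {}" "\<forall>x\<in>S. \<forall>i. 0 \<le> x$i"
    and "finite I" "\<forall>i\<in>I. \<exists>x\<in>S. 0 < x$i"
  shows "\<exists>x\<in>S. \<forall>i\<in>I. 0 < x$i"
  using assms(4,5)
proof (induction I rule: finite_induct)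
  case (insert j I)
  then obtain x where x: "x \<in> S" "\<forall>i\<in>I. 0 < x$i" by auto
  obtain z where z: "z \<in> S" "0 < z$j" using insert.prems by auto
  let ?w = "(1/2) *\<^sub>R x + (1/2) *\<^sub>R z"
  have "?w \<in> S" using convexD[OF assms(1) x(1) z(1), of "1/2" "1/2"] by simp
  moreover have "0 < ?w$i" if "i \<in> insert j I" for i
  proof -
    have "0 \<le> x$i" "0 \<le> z$i" using x(1) z(1) assms(3) by auto
    moreover have "0 < x$i \<or> 0 < z$i" using that x(2) z(2) by auto
    ultimately show ?thesis by auto
  qed
  ultimately show ?case by blast
qed (use assms(2) in auto)

lemma full_flow_positive_on_all:
  assumes "is_full st ar F" "F \<noteq> {}"
  shows "\<exists>x\<in>flow_polytope st ar F. \<forall>e\<in>F. 0 < x$e"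
proof -
  have "flow_polytope st ar F \<noteq> {}"
    using full_flow_positive[OF assms(1)] assms(2) by blast
  moreover have "\<forall>x\<in>flow_polytope st ar F. \<forall>e. 0 \<le> x$e"
    by (simp add: flow_polytope_def)
  ultimately show ?thesis
    using convex_exists_positive_on[OF convex_flow_polytope _ _ finite] full_flow_positive[OF assms(1)]
    by blast
qed

lemma exists_nonneg_perturbation:
  fixes x d :: "real^'n"
  assumes "\<forall>i. 0 \<le> x$i" "\<forall>i. 0 < x$i \<or> d$i = 0"
  shows "\<exists>\<epsilon>>0. \<forall>i. 0 \<le> x$i + \<epsilon> * d$i"
proof -
  have "\<forall>\<^sub>F \<epsilon> in at_right 0. 0 \<le> x$i + \<epsilon> * d$i" for i
  proof (cases "0 < x$i")
    case True
    have "((\<lambda>\<epsilon>. x$i + \<epsilon> * d$i) \<longlongrightarrow> x$i + 0 * d$i) (at_right 0)"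
      by (intro tendsto_intros)
    from order_tendstoD(1)[OF this[simplified] True] show ?thesis
      by (rule eventually_mono) simp
  qed (use assms in auto)
  then have "\<forall>\<^sub>F \<epsilon> in at_right 0. 0 < \<epsilon> \<and> (\<forall>i. 0 \<le> x$i + \<epsilon> * d$i)"
    by (intro eventually_conj eventually_all_finite eventually_at_right_less)
  then show ?thesis
    using eventually_happens'[OF trivial_limit_at_right_real] by blast
qed

lemma flow_polytope_perturb:
  assumes x: "x \<in> flow_polytope st ar F" "\<forall>e\<in>F. 0 < x$e"
    and d: "d \<in> circulations st ar F" "d \<bullet> 1 = 0"
  shows "\<exists>\<epsilon>>0. x + \<epsilon> *\<^sub>R d \<in> flow_polytope st ar F"
proof -
  have "\<forall>e. 0 < x$e \<or> d$e = 0"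
    using x(2) d(1) by (auto simp: circulations_def coord_subspace_def)
  moreover have "\<forall>e. 0 \<le> x$e"
    using x(1) by (simp add: flow_polytope_def)
  ultimately obtain \<epsilon> where "\<epsilon> > 0" "\<forall>e. 0 \<le> x$e + \<epsilon> * d$e"
    using exists_nonneg_perturbation by blast
  moreover have "x + \<epsilon> *\<^sub>R d \<in> circulations st ar F"
    using x(1) d(1) by (simp add: flow_polytope_def subspace_add subspace_scale subspace_circulations)
  ultimately show ?thesis
    using x(1) d(2) by (auto simp: flow_polytope_def inner_add_left)
qed

lemma flow_polytope_is_face:
  fixes st ar :: "'e::finite \<Rightarrow> 'v"
  assumes "is_full st ar F" "F \<noteq> {}"
  shows "is_face (flow_polytope st ar UNIV) (flow_polytope st ar F)"
proof -
  define P where "P = flow_polytope st ar UNIV"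
  have P_F: "flow_polytope st ar F = {x \<in> P. \<forall>e. e \<notin> F \<longrightarrow> x$e = 0}"
    using restr_face_flow_polytope[of st ar F] by (simp add: P_def restr_face_def)
  define w :: "real^'e" where "w = (\<chi> e. of_bool (e \<notin> F))"
  have inner_w: "x \<bullet> w = (\<Sum>e\<in>-F. x$e)" for x
    by (simp add: w_def inner_vec_def Compl_eq)
  have w_nonneg: "0 \<le> x \<bullet> w" if "x \<in> P" for x
    using that by (simp add: inner_w P_def flow_polytope_def sum_nonneg)
  have w_zero_iff: "x \<bullet> w = 0 \<longleftrightarrow> (\<forall>e. e \<notin> F \<longrightarrow> x$e = 0)" if "x \<in> P" for x
    using that sum_nonneg_eq_0_iff[of "-F" "\<lambda>e. x$e"]
    by (auto simp: inner_w P_def flow_polytope_def)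
  obtain x0 where x0: "x0 \<in> flow_polytope st ar F"
    using full_flow_positive[OF assms(1)] assms(2) by blast
  have "flow_polytope st ar F = {x \<in> P. \<forall>y\<in>P. x \<bullet> w \<le> y \<bullet> w}"
  proof (intro equalityI subsetI)
    fix x assume "x \<in> flow_polytope st ar F"
    then have "x \<in> P" "x \<bullet> w = 0" using P_F w_zero_iff by auto
    then show "x \<in> {x \<in> P. \<forall>y\<in>P. x \<bullet> w \<le> y \<bullet> w}"
      using w_nonneg by auto
  next
    fix x assume x: "x \<in> {x \<in> P. \<forall>y\<in>P. x \<bullet> w \<le> y \<bullet> w}"
    then have "x \<bullet> w \<le> x0 \<bullet> w" using x0 P_F by blast
    also have "x0 \<bullet> w = 0" using x0 P_F w_zero_iff by blast
    finally show "x \<in> flow_polytope st ar F"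
      using x P_F w_zero_iff w_nonneg by force
  qed
  moreover have "linear (\<lambda>x. x \<bullet> w)"
    by (simp add: bounded_linear.linear bounded_linear_inner_left)
  ultimately show ?thesis
    using x0 unfolding is_face_def P_def by blast
qed

lemma convex_linear_argmin:
  fixes f :: "'a::real_vector \<Rightarrow> real"
  assumes "convex P" "linear f"
  shows "convex {x \<in> P. \<forall>y\<in>P. f x \<le> f y}"
proof (rule convexI)
  fix x y u v assume x: "x \<in> {x \<in> P. \<forall>y\<in>P. f x \<le> f y}" and y: "y \<in> {x \<in> P. \<forall>y\<in>P. f x \<le> f y}"
    and uv: "0 \<le> (u::real)" "0 \<le> v" "u + v = 1"
  have "f (u *\<^sub>R x + v *\<^sub>R y) \<le> f z" if "z \<in> P" for z
  proof -
    have "u * f x + v * f y \<le> u * f z + v * f z"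
      using x y that uv by (intro add_mono mult_left_mono) auto
    then show ?thesis
      using uv assms(2) by (simp add: linear_add linear_scale flip: distrib_right)
  qed
  then show "u *\<^sub>R x + v *\<^sub>R y \<in> {x \<in> P. \<forall>y\<in>P. f x \<le> f y}"
    using convexD[OF assms(1)] x y uv by blast
qed

lemma linear_argmin_segment:
  fixes f :: "'a::real_vector \<Rightarrow> real"
  assumes "linear f" "\<forall>w\<in>P. f x \<le> f w" "x + \<epsilon> *\<^sub>R (x - y) \<in> P" "0 < \<epsilon>"
  shows "f y \<le> f x"
proof -
  have "f x \<le> f (x + \<epsilon> *\<^sub>R (x - y))"
    using assms(2,3) by blast
  also have "\<dots> = f x + \<epsilon> * (f x - f y)"
    using assms(1) by (simp add: linear_add linear_scale linear_diff)
  finally have "0 \<le> \<epsilon> * (f x - f y)" by simp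
  then show ?thesis
    using assms(4) by (simp add: zero_le_mult_iff)
qed

lemma flow_support_cycle:
  fixes st ar :: "'e::finite \<Rightarrow> 'v"
  assumes x: "x \<in> flow_polytope st ar F" and e: "x$e \<noteq> 0"
  shows "\<exists>C. is_cycle st ar C \<and> set C \<subseteq> {e. x$e \<noteq> 0} \<and> e \<in> set C"
proof (rule ccontr)
  assume no_cycle: "\<not> ?thesis"
  define G where "G = {e. x$e \<noteq> 0}"
  have "{cycle_vec C |C. is_simple_cycle st ar C \<and> set C \<subseteq> G} \<subseteq> {y. y$e = 0}"
    using no_cycle by (auto simp: G_def is_simple_cycle_def cycle_vec_def count_list_0_iff)
  then have "cycle_polytope st ar G \<subseteq> {y. y$e = 0}"
    unfolding cycle_polytope_def by (rule hull_minimal) (simp add: convex_def)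
  moreover have "x \<in> flow_polytope st ar G"
    using x by (auto simp: G_def flow_polytope_def circulations_def coord_subspace_def)
  ultimately show False
    using e by (auto simp: cycle_polytope_eq_flow_polytope)
qed

lemma flow_polytope_subset_face:
  fixes st ar :: "'e::finite \<Rightarrow> 'v" and f :: "real^'e \<Rightarrow> real"
  defines "P \<equiv> flow_polytope st ar UNIV"
  assumes f: "linear f" and S: "S = {x \<in> P. \<forall>y\<in>P. f x \<le> f y}"
    and xb: "xb \<in> S" "xb \<in> flow_polytope st ar F" "\<forall>e\<in>F. 0 < xb$e"
  shows "flow_polytope st ar F \<subseteq> S"
proof
  fix y assume y: "y \<in> flow_polytope st ar F"
  have "xb - y \<in> circulations st ar F" "(xb - y) \<bullet> 1 = 0"
    using xb(2) y by (simp_all add: flow_polytope_def subspace_diff subspace_circulations inner_diff_left)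
  then obtain \<epsilon> where "\<epsilon> > 0" "xb + \<epsilon> *\<^sub>R (xb - y) \<in> P"
    using flow_polytope_perturb[OF xb(2,3)] flow_polytope_mono[of F UNIV] unfolding P_def by blast
  then have "f y \<le> f xb"
    using linear_argmin_segment[OF f] xb(1) S by blast
  moreover have "y \<in> P"
    using y flow_polytope_mono[of F UNIV] unfolding P_def by blast
  ultimately show "y \<in> S"
    using xb(1) S by fastforce
qed

lemma face_of_flow_polytope:
  fixes st ar :: "'e::finite \<Rightarrow> 'v"
  assumes "is_face (flow_polytope st ar UNIV) S"
  shows "\<exists>F. F \<noteq> {} \<and> is_full st ar F \<and> S = flow_polytope st ar F"
proof -
  define P where "P = flow_polytope st ar UNIV"
  obtain f :: "real^'e \<Rightarrow> real" where f: "linear f" and S: "S = {x \<in> P. \<forall>y\<in>P. f x \<le> f y}" and "S \<noteq> {}"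
    using assms unfolding is_face_def P_def by blast
  have S_P: "S \<subseteq> P" using S by blast
  have S_nonneg: "\<forall>x\<in>S. \<forall>e. 0 \<le> x$e"
    using S_P by (auto simp: P_def flow_polytope_def)
  define F where "F = {e. \<exists>x\<in>S. x$e \<noteq> 0}"
  have "S \<subseteq> flow_polytope st ar F"
    using S_P restr_face_flow_polytope[of st ar F] by (auto simp: P_def F_def restr_face_def)
  have "\<forall>e\<in>F. \<exists>x\<in>S. 0 < x$e"
    using S_nonneg unfolding F_def by (force simp: less_le)
  then obtain xb where "xb \<in> S" "\<forall>e\<in>F. 0 < xb$e"
    using convex_exists_positive_on[OF convex_linear_argmin[OF convex_flow_polytope f] _ _ finite]
      \<open>S \<noteq> {}\<close> S_nonneg unfolding S P_def by blast
  then have "flow_polytope st ar F \<subseteq> S"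
    using flow_polytope_subset_face[OF f S[unfolded P_def]] \<open>S \<subseteq> flow_polytope st ar F\<close> by blast
  moreover have "is_full st ar F"
    unfolding is_full_def F_def
    using flow_support_cycle S_P unfolding P_def by blast
  moreover have "F \<noteq> {}"
    using \<open>S \<noteq> {}\<close> S_P flow_support_nonempty unfolding F_def P_def by fastforce
  ultimately show ?thesis
    using \<open>S \<subseteq> flow_polytope st ar F\<close> by blast
qed

section \<open>Components and the rank of the incidence vectors\<close>

lemma equiv_conn_rel: "equiv V (conn_rel V st ar F)"
proof -
  define E where "E = {(st e, ar e) | e. e \<in> F} \<union> {(ar e, st e) | e. e \<in> F}"
  have "sym (E\<^sup>*)"
    by (rule sym_rtrancl) (auto simp: sym_def E_def)
  then show ?thesis
    unfolding equiv_def refl_on_def sym_def trans_def conn_rel_def E_def[symmetric]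
    by (blast intro: rtrancl_trans)
qed

lemma conn_rel_const:
  assumes "\<forall>e\<in>F. p (ar e) = p (st e)" "(u, w) \<in> conn_rel V st ar F"
  shows "p u = p w"
proof -
  have "(u, w) \<in> ({(st e, ar e) | e. e \<in> F} \<union> {(ar e, st e) | e. e \<in> F})\<^sup>*"
    using assms(2) by (simp add: conn_rel_def)
  then show ?thesis
    by (induction rule: rtrancl_induct) (use assms(1) in auto)
qed

lemma conn_class_closed:
  assumes "\<forall>e. st e \<in> V \<and> ar e \<in> V" "e \<in> F" "K \<in> V // conn_rel V st ar F"
  shows "st e \<in> K \<longleftrightarrow> ar e \<in> K"
proof -
  define R where "R = conn_rel V st ar F"
  have "(st e, ar e) \<in> R" "(ar e, st e) \<in> R"
    using assms(1,2) by (auto simp: R_def conn_rel_def)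
  moreover obtain v where "K = R `` {v}"
    using assms(3) unfolding R_def by (auto elim: quotientE)
  moreover have "trans R"
    using equiv_conn_rel unfolding R_def equiv_def by blast
  ultimately show ?thesis
    by (meson Image_singleton_iff transD)
qed

lemma equiv_exists_transversal:
  assumes "equiv V R"
  shows "\<exists>T \<subseteq> V. card T = card (V // R) \<and> (\<forall>X \<in> V // R. \<exists>!t. t \<in> T \<and> t \<in> X)"
proof -
  define rep where "rep X = (SOME v. v \<in> X)" for X :: "'a set"
  have rep: "rep X \<in> X" if "X \<in> V // R" for X
    unfolding rep_def using in_quotient_imp_non_empty[OF assms that] by (simp add: some_in_eq)
  have disj: "X = Y" if "X \<in> V // R" "Y \<in> V // R" "x \<in> X" "x \<in> Y" for X Y x
    using quotient_disj[OF assms that(1,2)] that(3,4) by blast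
  have "inj_on rep (V // R)"
    by (rule inj_onI) (use rep disj in metis)
  moreover have "rep ` (V // R) \<subseteq> V"
    using rep in_quotient_imp_subset[OF assms] by blast
  moreover have "\<exists>!t. t \<in> rep ` (V // R) \<and> t \<in> X" if "X \<in> V // R" for X
    using rep disj that by blast
  ultimately show ?thesis
    by (intro exI[of _ "rep ` (V // R)"]) (simp add: card_image)
qed

lemma dim_span_image_eq_card:
  fixes b :: "'a \<Rightarrow> 'b::euclidean_space"
  assumes "finite A" and indep: "\<And>p. (\<Sum>v\<in>A. p v *\<^sub>R b v) = 0 \<Longrightarrow> \<forall>v\<in>A. p v = 0"
  shows "dim (span (b ` A)) = card A"
proof -
  have inj: "inj_on b A"
  proof (rule inj_onI, rule ccontr)
    fix u w assume uw: "u \<in> A" "w \<in> A" "b u = b w" "u \<noteq> w"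
    define p where "p v = (if v = u then 1 else if v = w then -1 else (0::real))" for v
    have "(\<Sum>v\<in>A. p v *\<^sub>R b v) = b u - b w"
      using uw assms(1) by (simp add: p_def if_distrib[of "\<lambda>c. c *\<^sub>R _"] sum.If_cases)
    then have "p u = 0"
      using indep[of p] uw(1,3) by simp
    then show False by (simp add: p_def)
  qed
  have "independent (b ` A)"
  proof (rule independent_if_scalars_zero)
    fix f x assume "(\<Sum>x\<in>b ` A. f x *\<^sub>R x) = 0" "x \<in> b ` A"
    then show "f x = 0"
      using indep[of "f \<circ> b"] by (auto simp: sum.reindex[OF inj])
  qed (use assms(1) in simp)
  then show ?thesis
    by (simp add: dim_eq_card_independent card_image[OF inj])
qed

definition incidence_on :: "('e::finite \<Rightarrow> 'v) \<Rightarrow> ('e \<Rightarrow> 'v) \<Rightarrow> 'e set \<Rightarrow> 'v \<Rightarrow> real^'e" where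
  "incidence_on st ar F v = (\<chi> e. if e \<in> F then incidence st ar v $ e else 0)"

lemma incidence_on_combination:
  assumes "finite A" "e \<in> F"
  shows "(\<Sum>v\<in>A. p v *\<^sub>R incidence_on st ar F v) $ e
    = (if ar e \<in> A then p (ar e) else 0) - (if st e \<in> A then p (st e) else 0)"
proof -
  have delta: "(\<Sum>v\<in>A. p v * of_bool (a = v)) = (if a \<in> A then p a else 0)" for a
    using assms(1) by (simp add: of_bool_def if_distrib[of "\<lambda>c. _ * c"] cong: if_cong)
  show ?thesis
    using assms(2) by (simp add: incidence_on_def incidence_def sum_subtractf right_diff_distrib delta
        del: sum_mult_of_bool_eq)
qed

lemma sum_incidence_on_closed:
  assumes "finite K" "\<And>e. e \<in> F \<Longrightarrow> st e \<in> K \<longleftrightarrow> ar e \<in> K"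
  shows "(\<Sum>u\<in>K. incidence_on st ar F u) = 0"
proof -
  have "(\<Sum>u\<in>K. 1 *\<^sub>R incidence_on st ar F u) $ e = 0" for e
  proof (cases "e \<in> F")
    case True
    then show ?thesis
      using incidence_on_combination[OF assms(1) True, of "\<lambda>_. 1"] assms(2)[OF True] by simp
  qed (simp add: incidence_on_def)
  then show ?thesis by (simp add: vec_eq_iff)
qed

lemma incidence_on_independent:
  assumes V: "finite V" "\<forall>e. st e \<in> V \<and> ar e \<in> V"
    and T: "\<forall>X \<in> V // conn_rel V st ar F. \<exists>!t. t \<in> T \<and> t \<in> X"
    and p: "(\<Sum>v\<in>V - T. p v *\<^sub>R incidence_on st ar F v) = 0"
  shows "\<forall>v\<in>V - T. p v = 0"
proof
  define q where "q v = (if v \<in> V - T then p v else 0)" for v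
  have q_const: "\<forall>e\<in>F. q (ar e) = q (st e)"
    using incidence_on_combination[of "V - T" _ F p st ar] arg_cong[OF p, of "\<lambda>x. x $ _"] V(1)
    by (simp add: q_def)
  fix v assume v: "v \<in> V - T"
  then have "conn_rel V st ar F `` {v} \<in> V // conn_rel V st ar F"
    by (simp add: quotientI)
  from ex1_implies_ex[OF T[rule_format, OF this]]
  obtain t where t: "t \<in> T" "(v, t) \<in> conn_rel V st ar F"
    by blast
  have "q v = q t"
    using conn_rel_const[OF q_const t(2)] .
  then show "p v = 0"
    using v t(1) by (simp add: q_def)
qed

lemma incidence_on_in_span:
  assumes V: "finite V" "\<forall>e. st e \<in> V \<and> ar e \<in> V"
    and T: "\<forall>X \<in> V // conn_rel V st ar F. \<exists>!t. t \<in> T \<and> t \<in> X"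
    and v: "v \<in> V"
  shows "incidence_on st ar F v \<in> span (incidence_on st ar F ` (V - T))"
proof (cases "v \<in> T")
  case True
  define K where "K = conn_rel V st ar F `` {v}"
  have K: "K \<in> V // conn_rel V st ar F"
    using v by (simp add: K_def quotientI)
  have "v \<in> K"
    using v equiv_conn_rel[of V st ar F] by (simp add: K_def equiv_def refl_on_def)
  have "K \<subseteq> V"
    using in_quotient_imp_subset[OF equiv_conn_rel K] .
  then have "finite K" using V(1) finite_subset by blast
  have "(\<Sum>u\<in>K. incidence_on st ar F u) = 0"
    by (rule sum_incidence_on_closed[OF \<open>finite K\<close>]) (rule conn_class_closed[OF V(2) _ K])
  then have v_eq: "incidence_on st ar F v = - (\<Sum>u\<in>K - {v}. incidence_on st ar F u)"
    using sum.remove[OF \<open>finite K\<close> \<open>v \<in> K\<close>, of "incidence_on st ar F"]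
    by (simp add: eq_neg_iff_add_eq_0)
  have "K - {v} \<subseteq> V - T"
    using T K True \<open>v \<in> K\<close> \<open>K \<subseteq> V\<close> by blast
  then have "(\<Sum>u\<in>K - {v}. incidence_on st ar F u) \<in> span (incidence_on st ar F ` (V - T))"
    by (intro span_sum span_base imageI) blast
  then show ?thesis
    unfolding v_eq by (rule span_neg)
next
  case False
  then show ?thesis
    using v by (intro span_base imageI) blast
qed

lemma dim_span_incidence_on:
  fixes st ar :: "'e::finite \<Rightarrow> 'v"
  assumes V: "finite V" "\<forall>e. st e \<in> V \<and> ar e \<in> V"
  shows "dim (span (incidence_on st ar F ` V)) + num_components V st ar F = card V"
proof -
  obtain T where T: "T \<subseteq> V" "card T = num_components V st ar F"
    and unique: "\<forall>X \<in> V // conn_rel V st ar F. \<exists>!t. t \<in> T \<and> t \<in> X"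
    using equiv_exists_transversal[OF equiv_conn_rel, of V st ar F]
    unfolding num_components_def by meson
  have "span (incidence_on st ar F ` V) = span (incidence_on st ar F ` (V - T))"
    unfolding span_eq using incidence_on_in_span[OF V unique]
    by (auto intro: span_base)
  moreover have "dim (span (incidence_on st ar F ` (V - T))) = card (V - T)"
    using incidence_on_independent[OF V unique] V(1)
    by (intro dim_span_image_eq_card) auto
  moreover have "card (V - T) + card T = card V"
    using T(1) V(1) by (metis card_Diff_subset finite_subset card_mono le_add_diff_inverse2)
  ultimately show ?thesis using T(2) by simp
qed

section \<open>Dimension\<close>

lemma dim_coord_subspace: "dim (coord_subspace F) = card (F :: 'e::finite set)"
  using dim_substandard_cart[where 'a=real and d=F] by (simp add: coord_subspace_def dim_vec_eq)

lemma circulations_eq_orthogonal: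
  assumes "\<forall>e. st e \<in> V \<and> ar e \<in> V"
  shows "circulations st ar F =
    {y \<in> coord_subspace F. \<forall>x\<in>span (incidence_on st ar F ` V). orthogonal x y}"
proof -
  have inner_on: "y \<bullet> incidence_on st ar F v = y \<bullet> incidence st ar v" if "y \<in> coord_subspace F" for y v
    using that by (auto simp: coord_subspace_def incidence_on_def inner_vec_def intro: sum.cong)
  have "incidence st ar v = 0" if "v \<notin> V" for v
    using assms that by (auto simp: incidence_def vec_eq_iff)
  then have "y \<in> circulations st ar F \<longleftrightarrow> (\<forall>v\<in>V. orthogonal (incidence_on st ar F v) y)"
    if "y \<in> coord_subspace F" for y
    using that inner_on by (auto simp: circulations_def orthogonal_def inner_commute)
  moreover have "(\<forall>x\<in>span (incidence_on st ar F ` V). orthogonal x y)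
      \<longleftrightarrow> (\<forall>v\<in>V. orthogonal (incidence_on st ar F v) y)" (is "?span \<longleftrightarrow> ?gens") for y
  proof
    assume ?gens
    show ?span
    proof
      fix x assume "x \<in> span (incidence_on st ar F ` V)"
      then have "orthogonal y x"
        by (rule orthogonal_to_span) (use \<open>?gens\<close> in \<open>auto simp: orthogonal_commute\<close>)
      then show "orthogonal x y" by (simp add: orthogonal_commute)
    qed
  qed (simp add: span_base)
  ultimately show ?thesis
    by (auto simp: circulations_def)
qed

lemma dim_circulations:
  fixes st ar :: "'e::finite \<Rightarrow> 'v"
  assumes "finite V" "\<forall>e. st e \<in> V \<and> ar e \<in> V"
  shows "int (dim (circulations st ar F)) = int (card F) - int (card V) + int (num_components V st ar F)"
proof -
  have "span (incidence_on st ar F ` V) \<subseteq> coord_subspace F"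
    by (rule span_minimal[OF _ subspace_coord_subspace]) (auto simp: incidence_on_def coord_subspace_def)
  then have "dim (circulations st ar F) + dim (span (incidence_on st ar F ` V)) = card F"
    unfolding circulations_eq_orthogonal[OF assms(2)] dim_coord_subspace[symmetric]
    by (rule dim_subspace_orthogonal_to_vectors[OF subspace_span subspace_coord_subspace])
  then show ?thesis
    using dim_span_incidence_on[OF assms, of F] by linarith
qed

lemma dim_subspace_hyperplane:
  fixes S :: "'a::euclidean_space set"
  assumes S: "subspace S" and x: "x \<in> S" "x \<bullet> a \<noteq> 0"
  shows "dim {y \<in> S. y \<bullet> a = 0} + 1 = dim S"
proof -
  define H where "H = {y \<in> S. y \<bullet> a = 0}"
  have "subspace H"
    using S by (auto simp: H_def subspace_def inner_add_left)
  moreover have "x \<notin> H"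
    using x(2) by (simp add: H_def)
  ultimately have "x \<notin> span H"
    by (simp add: span_eq_iff[THEN iffD2])
  then have "dim (insert x H) = dim H + 1"
    by (simp add: dim_insert)
  moreover have "span (insert x H) = S"
  proof (rule span_subspace)
    show "S \<subseteq> span (insert x H)"
    proof
      fix y assume y: "y \<in> S"
      define c where "c = (y \<bullet> a) / (x \<bullet> a)"
      have "y - c *\<^sub>R x \<in> H"
        using S x y by (simp add: H_def c_def subspace_diff subspace_scale inner_diff_left)
      then have "(y - c *\<^sub>R x) + c *\<^sub>R x \<in> span (insert x H)"
        by (intro span_add span_scale span_base) auto
      then show "y \<in> span (insert x H)" by simp
    qed
  qed (use S x in \<open>auto simp: H_def\<close>)
  ultimately show ?thesis
    using S dim_span[of "insert x H"] by (simp add: H_def)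
qed

lemma aff_dim_flow_polytope:
  assumes "is_full st ar F" "F \<noteq> {}"
  shows "aff_dim (flow_polytope st ar F) = int (dim (circulations st ar F)) - 1"
proof -
  obtain xb where xb: "xb \<in> flow_polytope st ar F" "\<forall>e\<in>F. 0 < xb$e"
    using full_flow_positive_on_all[OF assms] by blast
  define T where "T = (+) (- xb) ` flow_polytope st ar F"
  define H where "H = {d \<in> circulations st ar F. d \<bullet> 1 = 0}"
  have "subspace H"
    using subspace_circulations[of st ar F] by (auto simp: H_def subspace_def inner_add_left)
  have "T \<subseteq> H"
    using xb(1) by (auto simp: T_def H_def flow_polytope_def subspace_diff[OF subspace_circulations]
        inner_diff_left)
  moreover have "H \<subseteq> span T"
  proof
    fix d assume "d \<in> H"
    then obtain \<epsilon> where "\<epsilon> > 0" "xb + \<epsilon> *\<^sub>R d \<in> flow_polytope st ar F"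
      using flow_polytope_perturb[OF xb] by (auto simp: H_def)
    then have "\<epsilon> *\<^sub>R d \<in> T"
      by (force simp: T_def)
    then have "(1 / \<epsilon>) *\<^sub>R (\<epsilon> *\<^sub>R d) \<in> span T"
      by (intro span_scale span_base)
    then show "d \<in> span T"
      using \<open>\<epsilon> > 0\<close> by simp
  qed
  ultimately have "dim T = dim H"
    using \<open>subspace H\<close> dim_span[of T] span_subspace[of T H] by metis
  moreover have "aff_dim (flow_polytope st ar F) = int (dim T)"
    unfolding T_def by (rule aff_dim_eq_dim) (rule hull_inc[OF xb(1)])
  moreover have "dim H + 1 = dim (circulations st ar F)"
    using dim_subspace_hyperplane[OF subspace_circulations[of st ar F], where x=xb and a=1] xb(1)
    by (simp add: H_def flow_polytope_def)
  ultimately show ?thesis by simp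
qed

theorem mainTheorem6:
  fixes V :: "'v set" and st ar :: "'e::finite \<Rightarrow> 'v"
  assumes "finite V" and "\<forall>e. st e \<in> V \<and> ar e \<in> V"
  shows "bij_betw (\<lambda>F. restr_face (cycle_polytope st ar UNIV) F)
           {F. F \<noteq> {} \<and> is_full st ar F}
           {S. is_face (cycle_polytope st ar UNIV) S}
       \<and> (\<forall>F1 F2. F1 \<noteq> {} \<and> is_full st ar F1 \<and> F2 \<noteq> {} \<and> is_full st ar F2 \<longrightarrow>
            (F1 \<subseteq> F2 \<longleftrightarrow> restr_face (cycle_polytope st ar UNIV) F1
                          \<subseteq> restr_face (cycle_polytope st ar UNIV) F2))
       \<and> (\<forall>F. F \<noteq> {} \<and> is_full st ar F \<longrightarrow>
            cycle_polytope st ar F = restr_face (cycle_polytope st ar UNIV) F \<and>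
            aff_dim (restr_face (cycle_polytope st ar UNIV) F)
              = int (card F) - int (card V) + int (num_components V st ar F) - 1)"
proof -
  let ?full = "{F. F \<noteq> {} \<and> is_full st ar F}"
  have restr: "restr_face (cycle_polytope st ar UNIV) = flow_polytope st ar"
    by (simp add: fun_eq_iff cycle_polytope_eq_flow_polytope restr_face_flow_polytope)
  have "inj_on (flow_polytope st ar) ?full"
    by (rule inj_onI) (use flow_polytope_subset_iff in blast)
  moreover have "flow_polytope st ar ` ?full = {S. is_face (cycle_polytope st ar UNIV) S}"
    using flow_polytope_is_face face_of_flow_polytope
    by (fastforce simp: cycle_polytope_eq_flow_polytope)
  moreover have "aff_dim (flow_polytope st ar F)
      = int (card F) - int (card V) + int (num_components V st ar F) - 1" if "F \<in> ?full" for F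
    using that aff_dim_flow_polytope[of st ar F] dim_circulations[OF assms, of F] by simp
  ultimately show ?thesis
    unfolding restr bij_betw_def
    by (auto simp: flow_polytope_subset_iff cycle_polytope_eq_flow_polytope)
qed

end
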